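(* Let $n>1$ and $k\ge1$. Let $\mathcal{B}=\{\mathcal{B}^{(0)},\mathcal{B}^{(1)},\mathcal{B}^{(2)}\}$ be a special $n$-Brinkhuis $k$-triple, and suppose some word of $\mathcal{B}^{(0)}$ begins with the letters $01$. Then: <ul> <li>$n\ge 7$;</li> <li>every word in $\mathcal{B}^{(0)}$ begins with $012$ and ends with $210$.</li> </ul>
   Context: Let $\Sigma=\{0,1,2\}$. A word over $\Sigma$ is square-free if it cannot be written as $xyyz$ with $y$ nonempty. $\mathcal{A}(n)$ is the set of square-free words of length $n$. For a word $w$, $\bar w$ denotes its reversal. $\tau$ is the letter permutation $0\mapsto1$, $1\mapsto2$, $2\mapsto0$, applied letterwise to words and elementwise to sets of words. An $n$-Brinkhuis $(k_0,k_1,k_2)$-triple consists of sets $\mathcal{B}^{(i)}\subset\mathcal{A}(n)$, $i\in\{0,1,2\}$, where $\mathcal{B}^{(i)}$ has $k_i\ge1$ distinct words. The defining condition: for every square-free word $ii'i''\in\mathcal{A}(3)$ and all $u\in\mathcal{B}^{(i)}$, $v\in\mathcal{B}^{(i')}$, $x\in\mathcal{B}^{(i'')}$, the concatenation $uvx$ is square-free. A special $n$-Brinkhuis $k$-triple is an $n$-Brinkhuis $(k,k,k)$-triple satisfying two further conditions: <ul> <li>$\mathcal{B}^{(1)}=\tau(\mathcal{B}^{(0)})$ and $\mathcal{B}^{(2)}=\tau^2(\mathcal{B}^{(0)})$;</li> <li>$w\in\mathcal{B}^{(0)}$ implies $\bar w\in\mathcal{B}^{(0)}$.</li> </ul> 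*)

theory Defs
  imports Main
begin

definition is_word :: "nat list \<Rightarrow> bool" where
  "is_word w \<longleftrightarrow> set w \<subseteq> {0,1,2}"

definition square_free :: "nat list \<Rightarrow> bool" where
  "square_free w \<longleftrightarrow> \<not> (\<exists>x y z. y \<noteq> [] \<and> w = x @ y @ y @ z)"

definition sqfree_words :: "nat \<Rightarrow> nat list set" where
  "sqfree_words n = {w. is_word w \<and> length w = n \<and> square_free w}"

definition tau_letter :: "nat \<Rightarrow> nat" where
  "tau_letter a = (a + 1) mod 3"

definition tau :: "nat list \<Rightarrow> nat list" where
  "tau w = map tau_letter w"

definition brinkhuis_triple ::
  "nat \<Rightarrow> (nat \<Rightarrow> nat list set) \<Rightarrow> bool" where
  "brinkhuis_triple n B \<longleftrightarrow>
     (\<forall>i\<in>{0,1,2::nat}. B i \<subseteq> sqfree_words n \<and> finite (B i) \<and> card (B i) \<ge> 1) \<and>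
     (\<forall>i i' i''. [i, i', i''] \<in> sqfree_words 3 \<longrightarrow>
        (\<forall>u\<in>B i. \<forall>v\<in>B i'. \<forall>x\<in>B i''. square_free (u @ v @ x)))"

definition special_brinkhuis_triple ::
  "nat \<Rightarrow> nat \<Rightarrow> (nat \<Rightarrow> nat list set) \<Rightarrow> bool" where
  "special_brinkhuis_triple n k B \<longleftrightarrow>
     brinkhuis_triple n B \<and>
     (\<forall>i\<in>{0,1,2::nat}. card (B i) = k) \<and>
     B 1 = tau ` B 0 \<and> B 2 = (tau \<circ> tau) ` B 0 \<and>
     (\<forall>w\<in>B 0. rev w \<in> B 0)"

end

theory Submission
  imports Defs "HOL-Library.Sublist"
begin

text \<open>Let \<open>w \<in> B 0\<close> begin with 01. Its reversal lies in \<open>B 0\<close> and ends with 10, so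
  \<open>B 2\<close> contains a word ending with 02 and \<open>B 1\<close> one ending with 21. Putting an arbitrary
  \<open>u \<in> B 0\<close> between such a word and a word of the remaining class (index triples 201 and 102) shows
  that 02ab and 21ab are square-free, where ab are the first two letters of \<open>u\<close>; this forces
  ab = 01. The third letter of \<open>u\<close> is not 1, and it is not 0 either: otherwise \<open>\<tau>\<^sup>2(rev u)\<close>
  ends with 202, and following it by \<open>w\<close> (index triple 201) creates the square 2020. Closure under
  reversal turns the prefix 012 into the suffix 210. Finally, the only square-free word of length
  at most 6 that begins with 012 and ends with 210 is 01210, and index triple 020 rules it out as
  01210 20102 01210 contains the square 02010201.\<close>

text \<open>A bounded form of \<open>\<exists>y z. y \<noteq> [] \<and> w = y @ y @ z\<close>, so that together with
  \<open>square_free_Cons\<close> the simplifier decides square-freeness of concrete words.\<close>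

definition has_square_prefix :: "nat list \<Rightarrow> bool" where
  "has_square_prefix w \<longleftrightarrow>
     (\<exists>l \<in> set [1..<length w div 2 + 1]. take l w = take l (drop l w))"

lemma has_square_prefix_iff: "has_square_prefix w \<longleftrightarrow> (\<exists>y z. y \<noteq> [] \<and> w = y @ y @ z)"
proof
  assume "has_square_prefix w"
  then obtain l where l: "0 < l" "l \<le> length w div 2" "take l w = take l (drop l w)"
    unfolding has_square_prefix_def by (auto simp: Suc_le_eq)
  then have "w = take l w @ take l w @ drop l (drop l w)"
    by (metis append_take_drop_id)
  moreover have "take l w \<noteq> []"
    using l by auto
  ultimately show "\<exists>y z. y \<noteq> [] \<and> w = y @ y @ z" by blast
next
  assume "\<exists>y z. y \<noteq> [] \<and> w = y @ y @ z"
  then obtain y z where "y \<noteq> []" "w = y @ y @ z" by blast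
  then have "length y \<in> set [1..<length w div 2 + 1]" by (cases y) auto
  with \<open>w = y @ y @ z\<close> show "has_square_prefix w"
    unfolding has_square_prefix_def by (intro bexI[of _ "length y"]) simp_all
qed

lemma square_free_Nil [simp]: "square_free []"
  unfolding square_free_def by auto

lemma square_free_Cons:
  "square_free (a # w) \<longleftrightarrow> square_free w \<and> \<not> has_square_prefix (a # w)"
  unfolding square_free_def has_square_prefix_iff
  by (auto simp: Cons_eq_append_conv) metis+

lemmas square_free_simps = square_free_Nil square_free_Cons has_square_prefix_def

lemma square_free_suffix_prefix:
  assumes "square_free (x @ y)" and "suffix p x" and "prefix q y"
  shows "square_free (p @ q)"
  using assms unfolding square_free_def suffix_def prefix_def by (metis append.assoc)

lemma tau_Nil [simp]: "tau [] = []"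
  and tau_Cons [simp]: "tau (a # w) = tau_letter a # tau w"
  and tau_append [simp]: "tau (v @ w) = tau v @ tau w"
  by (simp_all add: tau_def)

lemma tau_letter_simps [simp]:
  "tau_letter 0 = 1" "tau_letter 1 = 2" "tau_letter (Suc 0) = 2" "tau_letter 2 = 0"
  by (simp_all add: tau_letter_def)

lemma square_free_Cons_Cons_neq:
  assumes "square_free (a # b # v)" shows "a \<noteq> b"
proof
  assume "a = b"
  then have "a # b # v = [] @ [a] @ [a] @ v" by simp
  with assms show False unfolding square_free_def by blast
qed

lemma suffix_tau: "suffix p w \<Longrightarrow> suffix (tau p) (tau w)"
  unfolding tau_def by (rule map_mono_suffix)

lemma first_letters_01:
  fixes a b :: nat
  assumes "a \<in> {0,1,2}" "b \<in> {0,1,2}" "a \<noteq> b"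
    and "square_free [0,2,a,b]" "square_free [2,1,a,b]"
  shows "a = 0 \<and> b = 1"
  using assms by (auto simp: square_free_simps)

lemma square_free_012_210_short:
  assumes "square_free w" "prefix [0,1,2] w" "suffix [2,1,0] w" "length w \<le> 6"
  shows "w = [0,1,2,1,0]"
proof -
  obtain v where v: "w = [0,1,2] @ v" using assms(2) by (auto simp: prefix_def)
  with assms(4) have "length v \<le> 3" by simp
  then consider "v = []" | x where "v = [x]" | x y where "v = [x,y]" | x y z where "v = [x,y,z]"
    by (auto simp: le_Suc_eq length_Suc_conv numeral_3_eq_3)
  then show ?thesis using assms(1,3) v by cases (auto simp: suffix_to_prefix square_free_simps)
qed

lemma brinkhuis_triple_square_free:
  assumes "brinkhuis_triple n B" "[i, i', i''] \<in> sqfree_words 3"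
    and "u \<in> B i" "v \<in> B i'" "x \<in> B i''"
  shows "square_free (u @ v @ x)"
proof -
  have "\<forall>i i' i''. [i, i', i''] \<in> sqfree_words 3 \<longrightarrow>
      (\<forall>u\<in>B i. \<forall>v\<in>B i'. \<forall>x\<in>B i''. square_free (u @ v @ x))"
    using assms(1) unfolding brinkhuis_triple_def by (rule conjunct2)
  with assms(2-5) show ?thesis by blast
qed

context
  fixes n k :: nat and B :: "nat \<Rightarrow> nat list set"
  assumes special: "special_brinkhuis_triple n k B"
begin

lemma B_brinkhuis_triple: "brinkhuis_triple n B"
  using special unfolding special_brinkhuis_triple_def by blast

lemma B0_sqfree_words: "u \<in> B 0 \<Longrightarrow> u \<in> sqfree_words n"
  using B_brinkhuis_triple unfolding brinkhuis_triple_def by blast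

lemma rev_in_B0: "u \<in> B 0 \<Longrightarrow> rev u \<in> B 0"
  using special unfolding special_brinkhuis_triple_def by blast

lemma tau_in_B1: "u \<in> B 0 \<Longrightarrow> tau u \<in> B 1"
  using special unfolding special_brinkhuis_triple_def by blast

lemma tau_tau_in_B2: "u \<in> B 0 \<Longrightarrow> tau (tau u) \<in> B 2"
  using special unfolding special_brinkhuis_triple_def by auto

lemma square_free_tau2_B0_tau:
  "x \<in> B 0 \<Longrightarrow> u \<in> B 0 \<Longrightarrow> y \<in> B 0 \<Longrightarrow> square_free (tau (tau x) @ u @ tau y)"
  by (rule brinkhuis_triple_square_free[OF B_brinkhuis_triple _ tau_tau_in_B2 _ tau_in_B1])
    (simp_all add: sqfree_words_def is_word_def square_free_simps)

lemma square_free_tau_B0_tau2: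
  "x \<in> B 0 \<Longrightarrow> u \<in> B 0 \<Longrightarrow> y \<in> B 0 \<Longrightarrow> square_free (tau x @ u @ tau (tau y))"
  by (rule brinkhuis_triple_square_free[OF B_brinkhuis_triple _ tau_in_B1 _ tau_tau_in_B2])
    (simp_all add: sqfree_words_def is_word_def square_free_simps)

lemma square_free_B0_tau2_B0:
  "x \<in> B 0 \<Longrightarrow> u \<in> B 0 \<Longrightarrow> y \<in> B 0 \<Longrightarrow> square_free (x @ tau (tau u) @ y)"
  by (rule brinkhuis_triple_square_free[OF B_brinkhuis_triple _ _ tau_tau_in_B2])
    (simp_all add: sqfree_words_def is_word_def square_free_simps)

lemma B0_length: "u \<in> B 0 \<Longrightarrow> length u = n"
  using B0_sqfree_words by (simp add: sqfree_words_def)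

lemma B0_letters: "u \<in> B 0 \<Longrightarrow> set u \<subseteq> {0,1,2}"
  using B0_sqfree_words by (simp add: sqfree_words_def is_word_def)

lemma B0_square_free: "u \<in> B 0 \<Longrightarrow> square_free u"
  using B0_sqfree_words by (simp add: sqfree_words_def)

lemma B0_prefix_01:
  assumes w: "w \<in> B 0" "prefix [0,1] w" and u: "u \<in> B 0"
  shows "prefix [0,1] u"
proof -
  have "2 \<le> length u"
    using prefix_length_le[OF w(2)] B0_length[OF w(1)] B0_length[OF u] by simp
  then obtain a b v where u_eq: "u = a # b # v"
    by (metis Suc_le_length_iff numeral_2_eq_2)
  have "suffix [1,0] (rev w)"
    using w(2) by (simp add: suffix_to_prefix)
  then have suffix_21: "suffix [2,1] (tau (rev w))" and suffix_02: "suffix [0,2] (tau (tau (rev w)))"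
    using suffix_tau[of "[1,0]"] suffix_tau[of "[2,1]"] by auto
  have "a \<in> {0,1,2}" "b \<in> {0,1,2}"
    using B0_letters[OF u] by (auto simp: u_eq)
  moreover have "a \<noteq> b"
    using B0_square_free[OF u] by (simp add: u_eq square_free_Cons_Cons_neq)
  moreover have "square_free [0,2,a,b]"
    using square_free_suffix_prefix[OF square_free_tau2_B0_tau[OF rev_in_B0[OF w(1)] u w(1)]
        suffix_02, of "[a,b]"]
    by (simp add: u_eq)
  moreover have "square_free [2,1,a,b]"
    using square_free_suffix_prefix[OF square_free_tau_B0_tau2[OF rev_in_B0[OF w(1)] u w(1)]
        suffix_21, of "[a,b]"]
    by (simp add: u_eq)
  ultimately have "a = 0 \<and> b = 1"
    by (rule first_letters_01)
  then show ?thesis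
    by (simp add: u_eq)
qed

lemma B0_length_ge_3:
  assumes w: "w \<in> B 0" "prefix [0,1] w"
  shows "3 \<le> n"
proof -
  obtain v where w_eq: "w = 0 # 1 # v"
    using w(2) by (auto simp: prefix_def)
  have "prefix [0,1] (rev w)"
    using B0_prefix_01[OF w rev_in_B0[OF w(1)]] .
  then have "v \<noteq> []"
    by (auto simp: w_eq)
  then show ?thesis
    using B0_length[OF w(1)] by (cases v) (auto simp: w_eq)
qed

lemma B0_prefix_012:
  assumes w: "w \<in> B 0" "prefix [0,1] w" and u: "u \<in> B 0"
  shows "prefix [0,1,2] u"
proof -
  obtain v where "u = 0 # 1 # v"
    using B0_prefix_01[OF w u] by (auto simp: prefix_def)
  moreover have "v \<noteq> []"
    using B0_length_ge_3[OF w] B0_length[OF u] \<open>u = 0 # 1 # v\<close> by auto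
  ultimately obtain c v' where u_eq: "u = 0 # 1 # c # v'"
    by (cases v) auto
  have "square_free (1 # c # v')"
    using B0_square_free[OF u] by (simp add: u_eq square_free_Cons)
  then have "c \<noteq> 1"
    by (auto dest: square_free_Cons_Cons_neq)
  moreover have "c \<noteq> 0"
  proof
    assume "c = 0"
    then have "suffix [0,1,0] (rev u)"
      by (simp add: u_eq suffix_to_prefix)
    then have "suffix [2,0,2] (tau (tau (rev u)))"
      using suffix_tau[of "[0,1,0]"] suffix_tau[of "[1,2,1]"] by auto
    with square_free_tau2_B0_tau[OF rev_in_B0[OF u] w(1) w(1)]
    have "square_free ([2,0,2] @ [0])"
      by (rule square_free_suffix_prefix) (use w(2) in \<open>auto simp: prefix_def\<close>)
    then show False
      by (simp add: square_free_simps)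
  qed
  moreover have "c \<in> {0,1,2}"
    using B0_letters[OF u] by (auto simp: u_eq)
  ultimately show ?thesis
    by (auto simp: u_eq)
qed

lemma B0_suffix_210:
  assumes "w \<in> B 0" "prefix [0,1] w" and "u \<in> B 0"
  shows "suffix [2,1,0] u"
  using B0_prefix_012[OF assms(1,2) rev_in_B0[OF assms(3)]] by (simp add: suffix_to_prefix)

lemma B0_length_ge_7:
  assumes w: "w \<in> B 0" "prefix [0,1] w"
  shows "7 \<le> n"
proof (rule ccontr)
  assume "\<not> 7 \<le> n"
  then have "w = [0,1,2,1,0]"
    using square_free_012_210_short B0_square_free B0_prefix_012 B0_suffix_210 B0_length w
    by simp
  moreover have "square_free (w @ tau (tau w) @ w)"
    using square_free_B0_tau2_B0[OF w(1) w(1) w(1)] .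
  ultimately show False
    by (simp add: square_free_simps)
qed

end

theorem lemma3:
  fixes n k :: nat and B :: "nat \<Rightarrow> nat list set"
  assumes "n > 1" and "k \<ge> 1"
    and "special_brinkhuis_triple n k B"
    and "\<exists>w\<in>B 0. take 2 w = [0, 1]"
  shows "n \<ge> 7 \<and> (\<forall>w\<in>B 0. take 3 w = [0, 1, 2] \<and> drop (length w - 3) w = [2, 1, 0])"
proof -
  obtain w where w: "w \<in> B 0" "prefix [0,1] w"
    using assms(4) by (metis take_is_prefix)
  have "take 3 u = [0,1,2] \<and> drop (length u - 3) u = [2,1,0]" if "u \<in> B 0" for u
  proof
    show "take 3 u = [0,1,2]"
      using B0_prefix_012[OF assms(3) w that] by (auto simp: prefix_def)
    show "drop (length u - 3) u = [2,1,0]"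
      using B0_suffix_210[OF assms(3) w that] by (auto simp: suffix_def)
  qed
  then show ?thesis
    using B0_length_ge_7[OF assms(3) w] by blast
qed

end
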